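(* Let $\lambda>0$. For every irrational $\alpha$, $\pm\lambda\in\sigma^{\mathcal{H}}$. Moreover, $\sigma^{\mathcal{H}}\cap(-\lambda,\lambda)\neq\emptyset$.
   Context: $\mathbb{T}=\mathbb{R}/\mathbb{Z}$, $\mathbb{T}_0=\{\theta\in\mathbb{T}:\cos 2\pi(n\alpha+\theta)\neq 0\ \forall n\in\mathbb{Z}\}$. For $\theta\in\mathbb{T}$, $n\in\mathbb{Z}$ put $v(\theta,n)=\cos2\pi((n-1)\alpha+\theta)$ if $n$ is odd and $v(\theta,n)=\cos 2\pi(n\alpha+\theta)$ if $n$ is even; $c(\theta,n)=\lambda$ if $n$ is odd and $c(\theta,n)=\cos2\pi(n\alpha+\theta)$ if $n$ is even. For $\theta\in\mathbb{T}_0$, $\mathcal{H}_\theta$ acts on $\ell^2(\mathbb{Z})$ by $(\mathcal{H}_\theta u)(n)=c(\theta,n)u(n+1)+c(\theta,n-1)u(n-1)+v(\theta,n)u(n)$; $\sigma^{\mathcal{H}}$ is its spectrum, independent of $\theta$. *)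

theory Defs
  imports "HOL-Analysis.Analysis"
begin

definition l2Z :: "(int \<Rightarrow> complex) set" where
  "l2Z = {u. (\<lambda>n. (cmod (u n))^2) summable_on UNIV}"

text \<open>Admissible phases T_0 (theta taken in R; everything is 1-periodic in theta).\<close>
definition T0 :: "real \<Rightarrow> real set" where
  "T0 \<alpha> = {\<theta>. \<forall>n::int. cos (2 * pi * (of_int n * \<alpha> + \<theta>)) \<noteq> 0}"

definition vpot :: "real \<Rightarrow> real \<Rightarrow> int \<Rightarrow> real" where
  "vpot \<alpha> \<theta> n = (if odd n then cos (2 * pi * (of_int (n - 1) * \<alpha> + \<theta>))
                    else cos (2 * pi * (of_int n * \<alpha> + \<theta>)))"

definition chop :: "real \<Rightarrow> real \<Rightarrow> real \<Rightarrow> int \<Rightarrow> real" where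
  "chop lam \<alpha> \<theta> n = (if odd n then lam else cos (2 * pi * (of_int n * \<alpha> + \<theta>)))"

definition Hop :: "real \<Rightarrow> real \<Rightarrow> real \<Rightarrow> (int \<Rightarrow> complex) \<Rightarrow> int \<Rightarrow> complex" where
  "Hop lam \<alpha> \<theta> u n =
     of_real (chop lam \<alpha> \<theta> n) * u (n + 1) + of_real (chop lam \<alpha> \<theta> (n - 1)) * u (n - 1)
     + of_real (vpot \<alpha> \<theta> n) * u n"

text \<open>Spectrum of an operator on l2(Z): E is in the spectrum iff A - E is not a
  bijection of l2(Z) onto itself (for bounded operators the inverse is then
  automatically bounded by the open mapping theorem).\<close>
definition spec_l2Z :: "((int \<Rightarrow> complex) \<Rightarrow> int \<Rightarrow> complex) \<Rightarrow> complex set" where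
  "spec_l2Z A = {E. \<not> bij_betw (\<lambda>u n. A u n - E * u n) l2Z l2Z}"

end

theory Submission
  imports Defs
begin

text \<open>
  \<open>\<H>\<close> is a Jacobi matrix with bounded real coefficients, so everything reduces to finitely
  supported approximate eigenvectors. A real \<open>E\<close> admitting unit vectors \<open>\<psi>\<close> with
  \<open>\<parallel>(\<H> - E)\<psi>\<parallel>\<close> arbitrarily small lies in the spectrum: were \<open>\<H> - E\<close> onto \<open>l2(\<int>)\<close>, one could pick
  such \<open>\<psi>\<^sub>k\<close> with disjoint supports and \<open>\<parallel>(\<H> - E)\<psi>\<^sub>k\<parallel> \<le> 4\<^sup>-\<^sup>k\<close>, solve
  \<open>(\<H> - E)g = \<Sum>\<^sub>k 2\<^sup>-\<^sup>k\<psi>\<^sub>k\<close>, and pairing with \<open>\<psi>\<^sub>k\<close> would give \<open>2\<^sup>-\<^sup>k/2 \<le> 4\<^sup>-\<^sup>k\<parallel>g\<parallel>\<close> for all \<open>k\<close>.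

  For \<open>E = \<plusminus>\<lambda>\<close> such vectors are cut-offs of explicit bounded solutions of \<open>\<H>\<phi> = \<plusminus>\<lambda>\<phi>\<close>.
  For the interior point let \<open>\<sigma>\<close> be the infimum of \<open>\<parallel>\<H>\<psi>\<parallel>\<^sup>2\<close> over unit vectors: a test vector
  gives \<open>\<sigma> < \<lambda>\<^sup>2\<close>, a near-minimiser is an approximate eigenvector of \<open>\<H>\<^sup>2\<close> for \<open>\<sigma>\<close>, and
  \<open>\<H>\<^sup>2 - \<sigma> = (\<H> - \<surd>\<sigma>)(\<H> + \<surd>\<sigma>)\<close> makes \<open>\<surd>\<sigma>\<close> or \<open>-\<surd>\<sigma>\<close> an approximate eigenvalue of \<open>\<H>\<close>.
\<close>

section \<open>Jacobi operators on finitely supported sequences\<close>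

definition jacobi :: "(int \<Rightarrow> 'a::comm_ring_1) \<Rightarrow> (int \<Rightarrow> 'a) \<Rightarrow> (int \<Rightarrow> 'a) \<Rightarrow> int \<Rightarrow> 'a" where
  "jacobi a b x n = a n * x (n + 1) + a (n - 1) * x (n - 1) + b n * x n"

lemma jacobi_add_scale: "jacobi a b (\<lambda>n. x n + c * y n) = (\<lambda>n. jacobi a b x n + c * jacobi a b y n)"
  by (simp add: fun_eq_iff jacobi_def algebra_simps)

lemma jacobi_diff: "jacobi a b (\<lambda>n. x n - y n) = (\<lambda>n. jacobi a b x n - jacobi a b y n)"
  by (simp add: fun_eq_iff jacobi_def algebra_simps)

lemma jacobi_scale: "jacobi a b (\<lambda>n. c * x n) = (\<lambda>n. c * jacobi a b x n)"
  by (simp add: fun_eq_iff jacobi_def algebra_simps)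

lemma jacobi_minus_scalar: "jacobi a b x n - E * x n = jacobi a (\<lambda>n. b n - E) x n"
  by (simp add: jacobi_def algebra_simps)

abbreviation complexify :: "(int \<Rightarrow> real) \<Rightarrow> int \<Rightarrow> complex" where
  "complexify a \<equiv> \<lambda>n. complex_of_real (a n)"

lemma jacobi_of_real: "jacobi (complexify a) (complexify b) (complexify x) n = complex_of_real (jacobi a b x n)"
  by (simp add: jacobi_def)

definition supported_in :: "int \<Rightarrow> (int \<Rightarrow> 'a::zero) \<Rightarrow> bool" where
  "supported_in R x \<longleftrightarrow> (\<forall>n. R < \<bar>n\<bar> \<longrightarrow> x n = 0)"

text \<open>Meant for finitely supported \<open>x\<close>; on an infinite support the sum is \<open>0\<close>.\<close>
definition sqnorm :: "(int \<Rightarrow> real) \<Rightarrow> real" where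
  "sqnorm x = (\<Sum>n | x n \<noteq> 0. (x n)\<^sup>2)"

lemma supported_in_nonzero: "supported_in R x \<Longrightarrow> x n \<noteq> 0 \<Longrightarrow> \<bar>n\<bar> \<le> R"
  by (auto simp: supported_in_def not_less[symmetric])

lemma supported_in_mono: "supported_in R x \<Longrightarrow> R \<le> R' \<Longrightarrow> supported_in R' x"
  by (auto simp: supported_in_def)

lemma supported_in_jacobi: "supported_in R x \<Longrightarrow> supported_in (R + 1) (jacobi a b x)"
  by (auto simp: supported_in_def jacobi_def)

lemma supported_in_add_scale:
  "supported_in R (x :: int \<Rightarrow> real) \<Longrightarrow> supported_in R y \<Longrightarrow> supported_in R (\<lambda>n. x n + c * y n)"
  by (auto simp: supported_in_def)

lemma supported_in_diff:
  "supported_in R (x :: int \<Rightarrow> real) \<Longrightarrow> supported_in R y \<Longrightarrow> supported_in R (\<lambda>n. x n - y n)"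
  by (auto simp: supported_in_def)

lemma supported_in_scale: "supported_in R (x :: int \<Rightarrow> real) \<Longrightarrow> supported_in R (\<lambda>n. c * x n)"
  by (auto simp: supported_in_def)

lemma sum_supported_extend:
  assumes "supported_in R f" "R \<le> R'"
  shows "(\<Sum>n=-R'..R'. f n) = (\<Sum>n=-R..R. f n)"
  by (rule sum.mono_neutral_right) (use assms in \<open>auto simp: supported_in_def\<close>)

lemma sum_supported_shift:
  assumes "supported_in R f" "\<bar>c\<bar> \<le> 1"
  shows "(\<Sum>n=-(R+1)..R+1. f (n + c)) = (\<Sum>n=-R..R. f n)"
proof -
  have "(\<Sum>n=-(R+1)..R+1. f (n + c)) = (\<Sum>n=-(R+1)+c..R+1+c. f n)"
    using sum.reindex[of "\<lambda>n. n + c" "{-(R+1)..R+1}" f] by (simp add: inj_on_def)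
  also have "\<dots> = (\<Sum>n=-R..R. f n)"
    by (rule sum.mono_neutral_right) (use assms in \<open>auto simp: supported_in_def\<close>)
  finally show ?thesis .
qed

lemma sqnorm_eq_sum:
  assumes "supported_in R x" "R \<le> R'"
  shows "sqnorm x = (\<Sum>n=-R'..R'. (x n)\<^sup>2)"
  unfolding sqnorm_def
  by (rule sum.mono_neutral_left) (use assms in \<open>auto simp: abs_le_iff dest: supported_in_nonzero\<close>)

lemma sqnorm_supported: "supported_in R x \<Longrightarrow> sqnorm x = (\<Sum>n=-R..R. (x n)\<^sup>2)"
  using sqnorm_eq_sum[of R x R] by simp

lemma sqnorm_nonneg: "0 \<le> sqnorm x"
  by (simp add: sqnorm_def sum_nonneg)

lemma sum_sq_le_sqnorm:
  assumes "finite A" "supported_in R x"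
  shows "(\<Sum>n\<in>A. (x n)\<^sup>2) \<le> sqnorm x"
proof -
  have "(\<Sum>n\<in>A. (x n)\<^sup>2) = (\<Sum>n\<in>A \<inter> {-R..R}. (x n)\<^sup>2)"
    by (rule sum.mono_neutral_right) (use assms in \<open>auto simp: abs_le_iff dest: supported_in_nonzero\<close>)
  also have "\<dots> \<le> (\<Sum>n=-R..R. (x n)\<^sup>2)"
    by (rule sum_mono2) auto
  finally show ?thesis
    using sqnorm_eq_sum[OF assms(2) order_refl] by simp
qed

lemma sqnorm_scale:
  assumes "supported_in R x"
  shows "sqnorm (\<lambda>n. c * x n) = c\<^sup>2 * sqnorm x"
  by (simp add: sqnorm_supported[OF assms] sqnorm_supported[OF supported_in_scale[OF assms]]
      power_mult_distrib sum_distrib_left)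

lemma sqnorm_add_scale:
  assumes "supported_in R x" "supported_in R y"
  shows "sqnorm (\<lambda>n. x n + c * y n) = sqnorm x + 2 * c * (\<Sum>n=-R..R. x n * y n) + c\<^sup>2 * sqnorm y"
proof -
  have "sqnorm (\<lambda>n. x n + c * y n) = (\<Sum>n=-R..R. (x n)\<^sup>2 + 2 * c * (x n * y n) + c\<^sup>2 * (y n)\<^sup>2)"
    by (simp add: sqnorm_supported[OF supported_in_add_scale[OF assms]] power2_eq_square algebra_simps)
  also have "\<dots> = sqnorm x + 2 * c * (\<Sum>n=-R..R. x n * y n) + c\<^sup>2 * sqnorm y"
    by (simp add: sqnorm_supported[OF assms(1)] sqnorm_supported[OF assms(2)] sum.distrib sum_distrib_left)
  finally show ?thesis .
qed

lemma sqnorm_diff_le: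
  assumes "supported_in R x" "supported_in R y"
  shows "sqnorm (\<lambda>n. x n - y n) \<le> 2 * sqnorm x + 2 * sqnorm y"
proof -
  have "(x n - y n)\<^sup>2 \<le> 2 * (x n)\<^sup>2 + 2 * (y n)\<^sup>2" for n
    using zero_le_power2[of "x n + y n"] by (simp add: power2_eq_square algebra_simps)
  then have "sqnorm (\<lambda>n. x n - y n) \<le> (\<Sum>n=-R..R. 2 * (x n)\<^sup>2 + 2 * (y n)\<^sup>2)"
    by (simp add: sqnorm_supported[OF supported_in_diff[OF assms]] sum_mono)
  also have "\<dots> = 2 * sqnorm x + 2 * sqnorm y"
    by (simp add: sqnorm_supported[OF assms(1)] sqnorm_supported[OF assms(2)] sum.distrib sum_distrib_left)
  finally show ?thesis .
qed

lemma normalize_supported: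
  fixes x :: "int \<Rightarrow> real"
  assumes x: "supported_in R x" "0 < sqnorm x"
  shows "\<exists>\<psi>. supported_in R \<psi> \<and> sqnorm \<psi> = 1 \<and> sqnorm (jacobi a b \<psi>) * sqnorm x = sqnorm (jacobi a b x)"
proof -
  define s where "s = 1 / sqrt (sqnorm x)"
  have s2: "s\<^sup>2 * sqnorm x = 1"
    using x(2) by (simp add: s_def power_divide)
  have "jacobi a b (\<lambda>n. s * x n) = (\<lambda>n. s * jacobi a b x n)"
    by (rule jacobi_scale)
  then have "sqnorm (jacobi a b (\<lambda>n. s * x n)) * sqnorm x = sqnorm (jacobi a b x)"
    using sqnorm_scale[OF supported_in_jacobi[OF x(1)], of s] s2 by simp
  moreover have "sqnorm (\<lambda>n. s * x n) = 1"
    using sqnorm_scale[OF x(1)] s2 by simp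
  ultimately show ?thesis
    using supported_in_scale[OF x(1)] by blast
qed

lemma sum_jacobi_symmetric:
  fixes x y :: "int \<Rightarrow> 'a::comm_ring_1"
  assumes x: "supported_in R x"
  shows "(\<Sum>n=-(R+1)..R+1. jacobi a b x n * y n) = (\<Sum>n=-(R+1)..R+1. x n * jacobi a b y n)"
proof -
  define F where "F m = a (m - 1) * x m * y (m - 1)" for m
  define G where "G m = a m * x m * y (m + 1)" for m
  have F: "supported_in R F" and G: "supported_in R G"
    using x by (simp_all add: supported_in_def F_def G_def)
  have "(\<Sum>n=-(R+1)..R+1. jacobi a b x n * y n) =
     (\<Sum>n=-(R+1)..R+1. F (n + 1)) + (\<Sum>n=-(R+1)..R+1. G (n + -1)) + (\<Sum>n=-(R+1)..R+1. b n * x n * y n)"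
    by (simp add: jacobi_def F_def G_def sum.distrib ring_distribs)
  also have "\<dots> = (\<Sum>n=-(R+1)..R+1. G n) + (\<Sum>n=-(R+1)..R+1. F n) + (\<Sum>n=-(R+1)..R+1. b n * x n * y n)"
    using sum_supported_shift[OF F, of 1] sum_supported_shift[OF G, of "-1"]
      sum_supported_extend[OF F, of "R+1"] sum_supported_extend[OF G, of "R+1"]
    by simp
  also have "\<dots> = (\<Sum>n=-(R+1)..R+1. x n * jacobi a b y n)"
    by (simp add: jacobi_def F_def G_def sum.distrib ring_distribs mult_ac)
  finally show ?thesis .
qed

lemma sq_sum3_le: "((p::real) + q + r)\<^sup>2 \<le> 3 * (p\<^sup>2 + q\<^sup>2 + r\<^sup>2)"
  using zero_le_power2[of "p - q"] zero_le_power2[of "q - r"] zero_le_power2[of "p - r"]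
  by (simp add: power2_eq_square algebra_simps)

lemma sqnorm_jacobi_le:
  fixes a b x :: "int \<Rightarrow> real"
  assumes a: "\<And>n. \<bar>a n\<bar> \<le> M" and b: "\<And>n. \<bar>b n\<bar> \<le> M" and x: "supported_in R x"
  shows "sqnorm (jacobi a b x) \<le> 9 * M\<^sup>2 * sqnorm x"
proof -
  have sq: "(c * y)\<^sup>2 \<le> M\<^sup>2 * y\<^sup>2" if "\<bar>c\<bar> \<le> M" for c y :: real
    using power_mono[OF that abs_ge_zero, of 2] by (simp add: power_mult_distrib mult_right_mono)
  have pointwise: "(jacobi a b x n)\<^sup>2 \<le> 3 * M\<^sup>2 * ((x (n + 1))\<^sup>2 + (x (n + -1))\<^sup>2 + (x n)\<^sup>2)" for n
    using sq_sum3_le[of "a n * x (n + 1)" "a (n - 1) * x (n - 1)" "b n * x n"]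
      sq[OF a, of n "x (n + 1)"] sq[OF a, of "n - 1" "x (n - 1)"] sq[OF b, of n "x n"]
    by (simp add: jacobi_def algebra_simps)
  have x2: "supported_in R (\<lambda>n. (x n)\<^sup>2)"
    using x by (simp add: supported_in_def)
  have "sqnorm (jacobi a b x) = (\<Sum>n=-(R+1)..R+1. (jacobi a b x n)\<^sup>2)"
    by (rule sqnorm_supported[OF supported_in_jacobi[OF x]])
  also have "\<dots> \<le> (\<Sum>n=-(R+1)..R+1. 3 * M\<^sup>2 * ((x (n + 1))\<^sup>2 + (x (n + -1))\<^sup>2 + (x n)\<^sup>2))"
    by (rule sum_mono) (rule pointwise)
  also have "\<dots> = 3 * M\<^sup>2 * (3 * sqnorm x)"
    using sum_supported_shift[OF x2, of 1] sum_supported_shift[OF x2, of "-1"]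
      sum_supported_extend[OF x2, of "R+1"] sqnorm_supported[OF x]
    by (simp add: sum.distrib flip: sum_distrib_left)
  finally show ?thesis by simp
qed

section \<open>A Weyl criterion that uses surjectivity only\<close>

definition approx_eigenvalue :: "(int \<Rightarrow> real) \<Rightarrow> (int \<Rightarrow> real) \<Rightarrow> real \<Rightarrow> bool" where
  "approx_eigenvalue a b E \<longleftrightarrow>
     (\<forall>\<epsilon>>0. \<exists>\<psi> R. supported_in R \<psi> \<and> sqnorm \<psi> = 1 \<and> sqnorm (jacobi a (\<lambda>n. b n - E) \<psi>) \<le> \<epsilon>)"

lemma approx_eigenvalueI:
  assumes "\<And>\<epsilon>. 0 < \<epsilon> \<Longrightarrow>
    \<exists>x R. supported_in R x \<and> 0 < sqnorm x \<and> sqnorm (jacobi a (\<lambda>n. b n - E) x) \<le> \<epsilon> * sqnorm x"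
  shows "approx_eigenvalue a b E"
  unfolding approx_eigenvalue_def
proof (intro allI impI)
  fix \<epsilon> :: real
  assume "0 < \<epsilon>"
  then obtain x R where x: "supported_in R x" "0 < sqnorm x"
    and Jx: "sqnorm (jacobi a (\<lambda>n. b n - E) x) \<le> \<epsilon> * sqnorm x"
    using assms by blast
  obtain \<psi> where "supported_in R \<psi>" "sqnorm \<psi> = 1"
    and "sqnorm (jacobi a (\<lambda>n. b n - E) \<psi>) * sqnorm x = sqnorm (jacobi a (\<lambda>n. b n - E) x)"
    using normalize_supported[OF x] by blast
  then show "\<exists>\<psi> R. supported_in R \<psi> \<and> sqnorm \<psi> = 1 \<and> sqnorm (jacobi a (\<lambda>n. b n - E) \<psi>) \<le> \<epsilon>"
    using Jx x(2) by (metis mult_le_cancel_right_pos)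
qed

definition l2_sqnorm :: "(int \<Rightarrow> complex) \<Rightarrow> real" where
  "l2_sqnorm g = (\<Sum>\<^sub>\<infinity>n. (cmod (g n))\<^sup>2)"

lemma l2_sqnorm_nonneg: "0 \<le> l2_sqnorm g"
  unfolding l2_sqnorm_def by (rule infsum_nonneg) simp

lemma sum_le_l2_sqnorm: "g \<in> l2Z \<Longrightarrow> finite A \<Longrightarrow> (\<Sum>n\<in>A. (cmod (g n))\<^sup>2) \<le> l2_sqnorm g"
  unfolding l2_sqnorm_def l2Z_def by (rule finite_sum_le_infsum) auto

lemma unit_vector_in_l2Z: "(\<lambda>n. if n = m then 1 else 0) \<in> l2Z"
proof -
  have "(\<lambda>n. (cmod (if n = m then 1 else 0 :: complex))\<^sup>2) summable_on {m}"
    by simp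
  then show ?thesis
    unfolding l2Z_def by (subst (asm) summable_on_cong_neutral[where T = UNIV]) auto
qed

lemma jacobi_pairing_le:
  fixes a b \<psi> :: "int \<Rightarrow> real"
  assumes g: "g \<in> l2Z" and \<psi>: "supported_in R \<psi>"
  shows "(cmod (\<Sum>n=-(R+1)..R+1. complex_of_real (\<psi> n) * jacobi (complexify a) (complexify b) g n))\<^sup>2
           \<le> sqnorm (jacobi a b \<psi>) * l2_sqnorm g"
proof -
  define t where "t = jacobi a b \<psi>"
  have \<psi>': "supported_in R (complexify \<psi>)"
    using \<psi> by (simp add: supported_in_def)
  have "(\<Sum>n=-(R+1)..R+1. complex_of_real (\<psi> n) * jacobi (complexify a) (complexify b) g n)
      = (\<Sum>n=-(R+1)..R+1. jacobi (complexify a) (complexify b) (complexify \<psi>) n * g n)"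
    by (rule sum_jacobi_symmetric[OF \<psi>', symmetric])
  also have "\<dots> = (\<Sum>n=-(R+1)..R+1. complex_of_real (t n) * g n)"
    by (simp add: jacobi_of_real t_def)
  also have "cmod \<dots> \<le> (\<Sum>n=-(R+1)..R+1. \<bar>t n\<bar> * cmod (g n))"
    by (rule order_trans[OF norm_sum]) (simp add: norm_mult)
  finally have "(cmod (\<Sum>n=-(R+1)..R+1. complex_of_real (\<psi> n) * jacobi (complexify a) (complexify b) g n))\<^sup>2
      \<le> (\<Sum>n=-(R+1)..R+1. \<bar>t n\<bar> * cmod (g n))\<^sup>2"
    by (rule power_mono) simp
  also have "\<dots> \<le> (\<Sum>n=-(R+1)..R+1. \<bar>t n\<bar>\<^sup>2) * (\<Sum>n=-(R+1)..R+1. (cmod (g n))\<^sup>2)"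
    by (rule Cauchy_Schwarz_ineq_sum)
  also have "\<dots> \<le> sqnorm t * l2_sqnorm g"
    using mult_left_mono[OF sum_le_l2_sqnorm[OF g] sqnorm_nonneg[of t]]
    by (simp add: sqnorm_supported[OF supported_in_jacobi[OF \<psi>]] t_def)
  finally show ?thesis
    by (simp add: t_def)
qed

text \<open>If \<open>g\<close> is mapped to the unit vector at \<open>m\<close>, then \<open>\<psi> m\<close> is the pairing of \<open>J \<psi>\<close> with \<open>g\<close>.\<close>
lemma pointwise_le_sqnorm_jacobi:
  fixes a b :: "int \<Rightarrow> real"
  assumes surj: "l2Z \<subseteq> jacobi (complexify a) (complexify b) ` l2Z"
  obtains C where "0 \<le> C" "\<And>\<psi> R. supported_in R \<psi> \<Longrightarrow> (\<psi> m)\<^sup>2 \<le> C * sqnorm (jacobi a b \<psi>)"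
proof -
  obtain g where g: "g \<in> l2Z"
    and eq: "(\<lambda>n. if n = m then 1 else 0) = jacobi (complexify a) (complexify b) g"
    using subsetD[OF surj unit_vector_in_l2Z] by (rule imageE)
  show thesis
  proof (rule that[OF l2_sqnorm_nonneg])
    fix \<psi> :: "int \<Rightarrow> real" and R
    assume \<psi>: "supported_in R \<psi>"
    define R' where "R' = max R \<bar>m\<bar>"
    have \<psi>': "supported_in R' \<psi>"
      using \<psi> by (rule supported_in_mono) (simp add: R'_def)
    have "(\<Sum>n=-(R'+1)..R'+1. complex_of_real (\<psi> n) * jacobi (complexify a) (complexify b) g n)
        = complex_of_real (\<psi> m)"
      by (simp add: eq[symmetric] if_distrib[of "\<lambda>z. _ * z"] sum.delta cong: if_cong)
        (simp add: R'_def; arith)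
    then show "(\<psi> m)\<^sup>2 \<le> l2_sqnorm g * sqnorm (jacobi a b \<psi>)"
      using jacobi_pairing_le[OF g \<psi>', of a b] by (simp add: mult.commute)
  qed
qed

lemma disjointly_supported_sequence:
  fixes P :: "nat \<Rightarrow> (int \<Rightarrow> 'a::zero) \<Rightarrow> bool"
  assumes "\<And>k R. \<exists>\<psi> R'. supported_in R' \<psi> \<and> (\<forall>n. \<bar>n\<bar> \<le> R \<longrightarrow> \<psi> n = 0) \<and> P k \<psi>"
  obtains \<psi> :: "nat \<Rightarrow> int \<Rightarrow> 'a" where "\<And>k. P k (\<psi> k)" "\<And>k. \<exists>R. supported_in R (\<psi> k)"
    "\<And>j k n. \<psi> j n \<noteq> 0 \<Longrightarrow> \<psi> k n \<noteq> 0 \<Longrightarrow> j = k" "\<And>k n. \<psi> k n \<noteq> 0 \<Longrightarrow> int k < \<bar>n\<bar>"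
proof -
  have "\<forall>k R. \<exists>p. supported_in (snd p) (fst p) \<and> (\<forall>n. \<bar>n\<bar> \<le> R \<longrightarrow> fst p n = 0) \<and> P k (fst p)"
    using assms by fastforce
  then obtain F where F: "\<And>k R. supported_in (snd (F k R)) (fst (F k R))
      \<and> (\<forall>n. \<bar>n\<bar> \<le> R \<longrightarrow> fst (F k R) n = 0) \<and> P k (fst (F k R))"
    by metis
  define r where "r = rec_nat 0 (\<lambda>k r. max r (snd (F k r)) + 1)"
  have r_Suc: "r (Suc k) = max (r k) (snd (F k (r k))) + 1" for k
    by (simp add: r_def)
  have r_mono: "r j \<le> r k" if "j \<le> k" for j k
    using that by (induction k) (auto simp: r_Suc le_Suc_eq)
  have r_ge: "int k \<le> r k" for k
    by (induction k) (auto simp: r_def)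
  define \<psi> where "\<psi> k = fst (F k (r k))" for k
  have supp: "supported_in (r (Suc k)) (\<psi> k)" for k
    using F[of k "r k"] by (auto simp: \<psi>_def r_Suc elim: supported_in_mono)
  have vanish: "\<psi> k n = 0" if "\<bar>n\<bar> \<le> r k" for k n
    using F[of k "r k"] that by (simp add: \<psi>_def)
  show thesis
  proof (rule that)
    show "P k (\<psi> k)" for k
      using F[of k "r k"] by (simp add: \<psi>_def)
    show "\<exists>R. supported_in R (\<psi> k)" for k
      using supp by blast
    show "int k < \<bar>n\<bar>" if "\<psi> k n \<noteq> 0" for k n
      using vanish[of n k] that r_ge[of k] by linarith
  next
    have "\<psi> k n = 0" if "j < k" "\<psi> j n \<noteq> 0" for j k n
      using supported_in_nonzero[OF supp that(2)] r_mono[of "Suc j" k] that(1) vanish[of n k]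
      by simp
    then show "j = k" if "\<psi> j n \<noteq> 0" "\<psi> k n \<noteq> 0" for j k n
      using that by (metis linorder_neqE_nat)
  qed
qed

text \<open>The truncation \<open>k < \<bar>n\<bar>\<close> loses nothing for families with \<open>\<psi> k n = 0\<close> whenever \<open>\<bar>n\<bar> \<le> k\<close>.\<close>
definition superpose :: "(nat \<Rightarrow> real) \<Rightarrow> (nat \<Rightarrow> int \<Rightarrow> real) \<Rightarrow> int \<Rightarrow> real" where
  "superpose c \<psi> n = (\<Sum>k<nat \<bar>n\<bar>. c k * \<psi> k n)"

lemma sum_at_disjoint_support:
  assumes disjoint: "\<And>j k n. \<psi> j n \<noteq> 0 \<Longrightarrow> \<psi> k n \<noteq> 0 \<Longrightarrow> j = k"
    and far: "\<And>k n. \<psi> k n \<noteq> 0 \<Longrightarrow> int k < \<bar>n\<bar>"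
    and k: "\<psi> k n \<noteq> 0" and N: "nat \<bar>n\<bar> \<le> N" and h: "\<And>j. h j 0 = 0"
  shows "(\<Sum>j<N. h j (\<psi> j n)) = h k (\<psi> k n)"
proof -
  have "\<psi> j n = 0" if "j \<noteq> k" for j
    using disjoint[of j n k] k that by blast
  then have "(\<Sum>j<N. h j (\<psi> j n)) = (\<Sum>j<N. if j = k then h k (\<psi> k n) else 0)"
    by (intro sum.cong) (simp_all add: h)
  also have "\<dots> = h k (\<psi> k n)"
    using far[OF k] N by (simp add: nat_le_iff[symmetric] less_le_trans[of k "nat \<bar>n\<bar>"])
  finally show ?thesis .
qed

lemma mult_superpose:
  assumes "\<And>j k n. \<psi> j n \<noteq> 0 \<Longrightarrow> \<psi> k n \<noteq> 0 \<Longrightarrow> j = k"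
    and "\<And>k n. \<psi> k n \<noteq> 0 \<Longrightarrow> int k < \<bar>n\<bar>"
  shows "\<psi> k n * superpose c \<psi> n = c k * (\<psi> k n)\<^sup>2"
proof (cases "\<psi> k n = 0")
  case False
  then show ?thesis
    using sum_at_disjoint_support[of \<psi> k n "nat \<bar>n\<bar>" "\<lambda>j v. c j * v", OF assms False]
    by (simp add: superpose_def power2_eq_square)
qed simp

lemma superpose_in_l2Z:
  assumes disjoint: "\<And>j k n. \<psi> j n \<noteq> 0 \<Longrightarrow> \<psi> k n \<noteq> 0 \<Longrightarrow> j = k"
    and far: "\<And>k n. \<psi> k n \<noteq> 0 \<Longrightarrow> int k < \<bar>n\<bar>"
    and supp: "\<And>k. \<exists>R. supported_in R (\<psi> k)" and le1: "\<And>k. sqnorm (\<psi> k) \<le> 1"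
    and c: "summable (\<lambda>k. (c k)\<^sup>2)"
  shows "complexify (superpose c \<psi>) \<in> l2Z"
proof -
  have sq: "(superpose c \<psi> n)\<^sup>2 = (\<Sum>k<N. (c k)\<^sup>2 * (\<psi> k n)\<^sup>2)" if "nat \<bar>n\<bar> \<le> N" for n N
  proof (cases "\<exists>k. \<psi> k n \<noteq> 0")
    case True
    then obtain k where k: "\<psi> k n \<noteq> 0" ..
    then show ?thesis
      using sum_at_disjoint_support[of \<psi> k n N "\<lambda>j v. (c j)\<^sup>2 * v\<^sup>2", OF disjoint far k that]
        sum_at_disjoint_support[of \<psi> k n "nat \<bar>n\<bar>" "\<lambda>j v. c j * v", OF disjoint far k]
      by (simp add: superpose_def power_mult_distrib)
  qed (simp add: superpose_def)
  have "sum (\<lambda>n. (cmod (complexify (superpose c \<psi>) n))\<^sup>2) A \<le> (\<Sum>k. (c k)\<^sup>2)"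
    if A: "finite A" for A
  proof -
    define N where "N = (\<Sum>n\<in>A. nat \<bar>n\<bar>)"
    have N: "nat \<bar>n\<bar> \<le> N" if "n \<in> A" for n
      unfolding N_def by (rule member_le_sum[OF that _ A]) simp
    have "sum (\<lambda>n. (cmod (complexify (superpose c \<psi>) n))\<^sup>2) A = (\<Sum>n\<in>A. \<Sum>k<N. (c k)\<^sup>2 * (\<psi> k n)\<^sup>2)"
      by (rule sum.cong) (simp_all add: sq N)
    also have "\<dots> = (\<Sum>k<N. (c k)\<^sup>2 * (\<Sum>n\<in>A. (\<psi> k n)\<^sup>2))"
      by (subst sum.swap) (simp add: sum_distrib_left)
    also have "\<dots> \<le> (\<Sum>k<N. (c k)\<^sup>2)"
    proof (rule sum_mono)
      fix k
      obtain R where "supported_in R (\<psi> k)"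
        using supp by blast
      then have "(\<Sum>n\<in>A. (\<psi> k n)\<^sup>2) \<le> 1"
        using sum_sq_le_sqnorm[OF A] le1[of k] by (meson order_trans)
      then show "(c k)\<^sup>2 * (\<Sum>n\<in>A. (\<psi> k n)\<^sup>2) \<le> (c k)\<^sup>2"
        using mult_left_mono[of _ 1 "(c k)\<^sup>2"] by simp
    qed
    also have "\<dots> \<le> (\<Sum>k. (c k)\<^sup>2)"
      using c by (rule sum_le_suminf) simp_all
    finally show ?thesis .
  qed
  then have "(\<lambda>n. (cmod (complexify (superpose c \<psi>) n))\<^sup>2) summable_on UNIV"
    by (intro nonneg_bdd_above_summable_on bdd_aboveI) auto
  then show ?thesis
    by (simp add: l2Z_def)
qed

lemma window_sqnorm_le_jacobi:
  fixes a b :: "int \<Rightarrow> real"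
  assumes surj: "l2Z \<subseteq> jacobi (complexify a) (complexify b) ` l2Z"
  obtains C where "0 \<le> C"
    "\<And>\<psi> R'. supported_in R' \<psi> \<Longrightarrow> (\<Sum>n=-R..R. (\<psi> n)\<^sup>2) \<le> C * sqnorm (jacobi a b \<psi>)"
proof -
  have "\<forall>m. \<exists>C\<ge>0. \<forall>\<psi> R'. supported_in R' \<psi> \<longrightarrow> (\<psi> m)\<^sup>2 \<le> C * sqnorm (jacobi a b \<psi>)"
    using pointwise_le_sqnorm_jacobi[OF surj] by metis
  then obtain C where C: "\<And>m. 0 \<le> C m"
    "\<And>m \<psi> R'. supported_in R' \<psi> \<Longrightarrow> (\<psi> m)\<^sup>2 \<le> C m * sqnorm (jacobi a b \<psi>)"
    by metis
  show thesis
  proof (rule that[of "\<Sum>m=-R..R. C m"])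
    show "0 \<le> (\<Sum>m=-R..R. C m)"
      by (simp add: C(1) sum_nonneg)
    show "(\<Sum>n=-R..R. (\<psi> n)\<^sup>2) \<le> (\<Sum>m=-R..R. C m) * sqnorm (jacobi a b \<psi>)"
      if "supported_in R' \<psi>" for \<psi> R'
      unfolding sum_distrib_right by (rule sum_mono) (rule C(2)[OF that])
  qed
qed

lemma sqnorm_jacobi_zero_on_window:
  fixes a b \<psi> :: "int \<Rightarrow> real" and R :: int
  assumes a: "\<And>n. \<bar>a n\<bar> \<le> M" and b: "\<And>n. \<bar>b n\<bar> \<le> M" and \<psi>: "supported_in R0 \<psi>"
  defines "\<psi>' \<equiv> \<lambda>n. if \<bar>n\<bar> \<le> R then 0 else \<psi> n"
  shows "supported_in R0 \<psi>'"
    and "sqnorm \<psi> = sqnorm \<psi>' + (\<Sum>n=-R..R. (\<psi> n)\<^sup>2)"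
    and "sqnorm (jacobi a b \<psi>') \<le> 2 * sqnorm (jacobi a b \<psi>) + 18 * M\<^sup>2 * (\<Sum>n=-R..R. (\<psi> n)\<^sup>2)"
proof -
  define \<xi> where "\<xi> n = (if \<bar>n\<bar> \<le> R then \<psi> n else 0)" for n
  define Q where "Q = max R0 R"
  show \<psi>': "supported_in R0 \<psi>'"
    using \<psi> by (simp add: supported_in_def \<psi>'_def)
  have \<xi>: "supported_in R \<xi>"
    by (simp add: supported_in_def \<xi>_def)
  have \<psi>Q: "supported_in Q \<psi>" and \<psi>'Q: "supported_in Q \<psi>'" and \<xi>Q: "supported_in Q \<xi>"
    using supported_in_mono[OF \<psi>] supported_in_mono[OF \<psi>'] supported_in_mono[OF \<xi>]
    by (simp_all add: Q_def)
  have sqnorm_\<xi>: "sqnorm \<xi> = (\<Sum>n=-R..R. (\<psi> n)\<^sup>2)"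
    unfolding sqnorm_supported[OF \<xi>] by (rule sum.cong) (auto simp: \<xi>_def)
  have "sqnorm \<psi> = sqnorm \<psi>' + sqnorm \<xi>"
    unfolding sqnorm_supported[OF \<psi>Q] sqnorm_supported[OF \<psi>'Q] sqnorm_supported[OF \<xi>Q]
    by (simp add: \<psi>'_def \<xi>_def flip: sum.distrib) (intro sum.cong; simp)
  then show "sqnorm \<psi> = sqnorm \<psi>' + (\<Sum>n=-R..R. (\<psi> n)\<^sup>2)"
    by (simp add: sqnorm_\<xi>)
  have "\<psi>' = (\<lambda>n. \<psi> n - \<xi> n)"
    by (simp add: fun_eq_iff \<psi>'_def \<xi>_def)
  then have "jacobi a b \<psi>' = (\<lambda>n. jacobi a b \<psi> n - jacobi a b \<xi> n)"
    by (simp add: jacobi_diff)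
  then have "sqnorm (jacobi a b \<psi>') \<le> 2 * sqnorm (jacobi a b \<psi>) + 2 * sqnorm (jacobi a b \<xi>)"
    using sqnorm_diff_le[OF supported_in_jacobi[OF \<psi>Q] supported_in_jacobi[OF \<xi>Q]] by simp
  also have "\<dots> \<le> 2 * sqnorm (jacobi a b \<psi>) + 18 * M\<^sup>2 * sqnorm \<xi>"
    using sqnorm_jacobi_le[where a = a and b = b, OF a b \<xi>] by (simp add: algebra_simps)
  finally show "sqnorm (jacobi a b \<psi>') \<le> 2 * sqnorm (jacobi a b \<psi>) + 18 * M\<^sup>2 * (\<Sum>n=-R..R. (\<psi> n)\<^sup>2)"
    by (simp add: sqnorm_\<xi>)
qed

lemma approx_null_vector_vanishing_on_window:
  fixes a b :: "int \<Rightarrow> real"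
  assumes a: "\<And>n. \<bar>a n\<bar> \<le> M" and b: "\<And>n. \<bar>b n\<bar> \<le> M"
    and surj: "l2Z \<subseteq> jacobi (complexify a) (complexify b) ` l2Z"
    and approx: "approx_eigenvalue a b 0" and \<epsilon>: "0 < \<epsilon>"
  shows "\<exists>\<psi> R'. supported_in R' \<psi> \<and> (\<forall>n. \<bar>n\<bar> \<le> R \<longrightarrow> \<psi> n = 0)
           \<and> 1/2 \<le> sqnorm \<psi> \<and> sqnorm \<psi> \<le> 1 \<and> sqnorm (jacobi a b \<psi>) \<le> \<epsilon>"
proof -
  obtain C where C0: "0 \<le> C"
    and C: "\<And>\<psi> R'. supported_in R' \<psi> \<Longrightarrow> (\<Sum>n=-R..R. (\<psi> n)\<^sup>2) \<le> C * sqnorm (jacobi a b \<psi>)"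
    using window_sqnorm_le_jacobi[OF surj] by metis
  define K where "K = 18 * M\<^sup>2 * C"
  define \<delta> where "\<delta> = min (1 / (2 * C + 1)) (\<epsilon> / (2 + K))"
  have K: "0 \<le> K"
    using C0 by (simp add: K_def)
  have "0 < \<delta>"
    using C0 K \<epsilon> by (simp add: \<delta>_def)
  then obtain \<psi> R0 where \<psi>: "supported_in R0 \<psi>" "sqnorm \<psi> = 1" "sqnorm (jacobi a b \<psi>) \<le> \<delta>"
    using approx by (auto simp: approx_eigenvalue_def)
  define W where "W = (\<Sum>n=-R..R. (\<psi> n)\<^sup>2)"
  have "W \<le> C * \<delta>"
    using C[OF \<psi>(1)] mult_left_mono[OF \<psi>(3) C0] by (simp add: W_def)
  also have "\<dots> \<le> C / (2 * C + 1)"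
    using mult_left_mono[of \<delta> "1 / (2 * C + 1)" C] C0 by (simp add: \<delta>_def)
  also have "\<dots> \<le> 1/2"
    using C0 by (simp add: field_simps)
  finally have W: "W \<le> 1/2" .
  have "2 * sqnorm (jacobi a b \<psi>) + 18 * M\<^sup>2 * W \<le> (2 + K) * \<delta>"
    using \<psi>(3) mult_left_mono[OF C[OF \<psi>(1)], of "18 * M\<^sup>2"] mult_left_mono[OF \<psi>(3), of "18 * M\<^sup>2 * C"] C0
    by (simp add: K_def W_def algebra_simps)
  also have "\<dots> \<le> (2 + K) * (\<epsilon> / (2 + K))"
    using K by (intro mult_left_mono) (simp_all add: \<delta>_def)
  also have "\<dots> = \<epsilon>"
    using K by simp
  finally have small: "2 * sqnorm (jacobi a b \<psi>) + 18 * M\<^sup>2 * W \<le> \<epsilon>" .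
  define \<psi>' where "\<psi>' = (\<lambda>n. if \<bar>n\<bar> \<le> R then 0 else \<psi> n)"
  note window = sqnorm_jacobi_zero_on_window[where a = a and b = b and M = M and R = R, OF a b \<psi>(1),
      folded \<psi>'_def W_def]
  have "\<forall>n. \<bar>n\<bar> \<le> R \<longrightarrow> \<psi>' n = 0"
    by (simp add: \<psi>'_def)
  moreover have "1/2 \<le> sqnorm \<psi>'" "sqnorm \<psi>' \<le> 1"
    using window(2) \<psi>(2) W sum_nonneg[of "{-R..R}" "\<lambda>n. (\<psi> n)\<^sup>2"] unfolding W_def by simp_all
  moreover have "sqnorm (jacobi a b \<psi>') \<le> \<epsilon>"
    using window(3) small by linarith
  ultimately show ?thesis
    using window(1) by blast
qed

lemma superpose_pairing_le:
  fixes a b :: "int \<Rightarrow> real"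
  assumes "\<And>j k n. \<psi> j n \<noteq> 0 \<Longrightarrow> \<psi> k n \<noteq> 0 \<Longrightarrow> j = k"
    and "\<And>k n. \<psi> k n \<noteq> 0 \<Longrightarrow> int k < \<bar>n\<bar>"
    and R: "supported_in R (\<psi> k)" and g: "g \<in> l2Z"
    and eq: "jacobi (complexify a) (complexify b) g = complexify (superpose c \<psi>)"
  shows "(c k * sqnorm (\<psi> k))\<^sup>2 \<le> sqnorm (jacobi a b (\<psi> k)) * l2_sqnorm g"
proof -
  have "(\<Sum>n=-(R+1)..R+1. complex_of_real (\<psi> k n) * jacobi (complexify a) (complexify b) g n)
      = complex_of_real (\<Sum>n=-(R+1)..R+1. \<psi> k n * superpose c \<psi> n)"
    by (simp add: eq)
  also have "(\<Sum>n=-(R+1)..R+1. \<psi> k n * superpose c \<psi> n) = c k * sqnorm (\<psi> k)"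
    by (simp add: mult_superpose[OF assms(1,2)] sqnorm_eq_sum[OF R, of "R+1"] sum_distrib_left)
  finally show ?thesis
    using jacobi_pairing_le[OF g R, of a b] by (simp add: norm_mult power_mult_distrib)
qed

lemma jacobi_not_onto_l2Z:
  fixes a b :: "int \<Rightarrow> real"
  assumes a: "\<And>n. \<bar>a n\<bar> \<le> M" and b: "\<And>n. \<bar>b n\<bar> \<le> M" and approx: "approx_eigenvalue a b 0"
  shows "\<not> l2Z \<subseteq> jacobi (complexify a) (complexify b) ` l2Z"
proof
  assume surj: "l2Z \<subseteq> jacobi (complexify a) (complexify b) ` l2Z"
  have "\<exists>\<psi> R'. supported_in R' \<psi> \<and> (\<forall>n. \<bar>n\<bar> \<le> R \<longrightarrow> \<psi> n = 0)
           \<and> (1/2 \<le> sqnorm \<psi> \<and> sqnorm \<psi> \<le> 1 \<and> sqnorm (jacobi a b \<psi>) \<le> (1/16)^k)" for k R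
    using approx_null_vector_vanishing_on_window[OF a b surj approx, of "(1/16)^k" R] by simp
  then obtain \<psi> :: "nat \<Rightarrow> int \<Rightarrow> real" where
    \<psi>: "\<And>k. 1/2 \<le> sqnorm (\<psi> k) \<and> sqnorm (\<psi> k) \<le> 1 \<and> sqnorm (jacobi a b (\<psi> k)) \<le> (1/16)^k"
    and supp: "\<And>k. \<exists>R. supported_in R (\<psi> k)"
    and disjoint: "\<And>j k n. \<psi> j n \<noteq> 0 \<Longrightarrow> \<psi> k n \<noteq> 0 \<Longrightarrow> j = k"
    and far: "\<And>k n. \<psi> k n \<noteq> 0 \<Longrightarrow> int k < \<bar>n\<bar>"
    by (rule disjointly_supported_sequence[where
          P = "\<lambda>k \<psi>. 1/2 \<le> sqnorm \<psi> \<and> sqnorm \<psi> \<le> 1 \<and> sqnorm (jacobi a b \<psi>) \<le> (1/16)^k"]) blast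
  define c :: "nat \<Rightarrow> real" where "c k = (1/2)^k" for k
  have c2: "(c k)\<^sup>2 = (1/4)^k" for k
    by (simp add: c_def power2_eq_square flip: power_mult_distrib)
  have "summable (\<lambda>k. (c k)\<^sup>2)"
    by (simp add: c2 summable_geometric)
  then have "complexify (superpose c \<psi>) \<in> l2Z"
    by (intro superpose_in_l2Z[of \<psi> c]) (use disjoint far supp \<psi> in auto)
  then obtain g where g: "g \<in> l2Z" and eq: "complexify (superpose c \<psi>) = jacobi (complexify a) (complexify b) g"
    using surj by (auto elim!: subsetD[THEN imageE])
  have "4^k \<le> 4 * l2_sqnorm g" for k
  proof -
    obtain R where R: "supported_in R (\<psi> k)"
      using supp by blast
    have "(1/16)^k * 4^k = (1/4::real)^k"
      by (simp flip: power_mult_distrib)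
    then have "(1/16)^k * (4^k / 4) = (c k / 2)\<^sup>2"
      by (simp add: power_divide c2)
    also have "\<dots> \<le> (c k * sqnorm (\<psi> k))\<^sup>2"
      using \<psi>[of k] by (intro power_mono) (simp_all add: c_def)
    also have "\<dots> \<le> sqnorm (jacobi a b (\<psi> k)) * l2_sqnorm g"
      by (rule superpose_pairing_le[of \<psi>, OF _ _ R g eq[symmetric]]) (use disjoint far in auto)
    also have "\<dots> \<le> (1/16)^k * l2_sqnorm g"
      using \<psi>[of k] l2_sqnorm_nonneg by (simp add: mult_right_mono)
    finally show ?thesis
      by (simp add: mult_left_le_imp_le)
  qed
  moreover obtain k where "4 * l2_sqnorm g < 4^k"
    using real_arch_pow[of 4] by auto
  ultimately show False
    by (meson not_le)
qed

lemma approx_eigenvalue_in_spec_l2Z: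
  fixes a b :: "int \<Rightarrow> real"
  assumes a: "\<And>n. \<bar>a n\<bar> \<le> M" and b: "\<And>n. \<bar>b n\<bar> \<le> M" and E: "approx_eigenvalue a b E"
  shows "complex_of_real E \<in> spec_l2Z (jacobi (complexify a) (complexify b))"
proof -
  have a': "\<bar>a n\<bar> \<le> M + \<bar>E\<bar>" and b': "\<bar>b n - E\<bar> \<le> M + \<bar>E\<bar>" for n
    using a[of n] b[of n] by linarith+
  have "approx_eigenvalue a (\<lambda>n. b n - E) 0"
    using E by (simp add: approx_eigenvalue_def)
  then have "\<not> l2Z \<subseteq> jacobi (complexify a) (complexify (\<lambda>n. b n - E)) ` l2Z"
    by (rule jacobi_not_onto_l2Z[OF a' b'])
  then have "\<not> bij_betw (jacobi (complexify a) (complexify (\<lambda>n. b n - E))) l2Z l2Z"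
    by (auto simp: bij_betw_def)
  moreover have "(\<lambda>u n. jacobi (complexify a) (complexify b) u n - complex_of_real E * u n)
      = jacobi (complexify a) (complexify (\<lambda>n. b n - E))"
    by (simp add: fun_eq_iff jacobi_minus_scalar)
  ultimately show ?thesis
    unfolding spec_l2Z_def by simp
qed

section \<open>Approximate eigenvalues from bounded solutions and from test vectors\<close>

definition tent :: "nat \<Rightarrow> int \<Rightarrow> real" where
  "tent L n = max 0 (1 - \<bar>real_of_int n\<bar> / L)"

lemma tent_lipschitz:
  assumes "1 \<le> L" "\<bar>j - n\<bar> \<le> 1"
  shows "\<bar>tent L j - tent L n\<bar> \<le> 1 / L"
proof -
  have "\<bar>\<bar>real_of_int j\<bar> - \<bar>real_of_int n\<bar>\<bar> \<le> 1"
    using assms(2) by linarith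
  then have "\<bar>\<bar>real_of_int j\<bar> / L - \<bar>real_of_int n\<bar> / L\<bar> \<le> 1 / L"
    using assms(1) by (simp add: divide_right_mono flip: diff_divide_distrib)
  then show ?thesis
    unfolding tent_def by linarith
qed

lemma supported_in_mult_tent: "1 \<le> L \<Longrightarrow> supported_in (int L) (\<lambda>n. \<phi> n * tent L n)"
  by (auto simp: supported_in_def tent_def field_simps)

lemma sqnorm_jacobi_mult_tent_le:
  fixes a b \<phi> :: "int \<Rightarrow> real"
  assumes a: "\<And>n. \<bar>a n\<bar> \<le> M" and sol: "\<And>n. jacobi a b \<phi> n = 0"
    and \<phi>: "\<And>n. \<bar>\<phi> n\<bar> \<le> 1" and L: "1 \<le> L"
  shows "sqnorm (jacobi a b (\<lambda>n. \<phi> n * tent L n)) \<le> 20 * M\<^sup>2 / L"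
proof -
  let ?w = "\<lambda>n. \<phi> n * tent L n"
  have M: "0 \<le> M"
    using a[of 0] by linarith
  have summand: "\<bar>a m * \<phi> k * (tent L j - tent L n)\<bar> \<le> M / L" if "\<bar>j - n\<bar> \<le> 1" for m k j n
    using mult_mono[OF mult_mono[OF a \<phi>] tent_lipschitz[OF L that]] M
    by (simp add: abs_mult)
  have pointwise: "(jacobi a b ?w n)\<^sup>2 \<le> (M / L + M / L)\<^sup>2" for n
  proof -
    have "jacobi a b ?w n = a n * \<phi> (n + 1) * (tent L (n + 1) - tent L n)
        + a (n - 1) * \<phi> (n - 1) * (tent L (n - 1) - tent L n)"
      using arg_cong[OF sol[of n], of "\<lambda>t. t * tent L n"] by (simp add: jacobi_def algebra_simps)
    then have "\<bar>jacobi a b ?w n\<bar> \<le> M / L + M / L"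
      using abs_triangle_ineq[of "a n * \<phi> (n + 1) * (tent L (n + 1) - tent L n)"
          "a (n - 1) * \<phi> (n - 1) * (tent L (n - 1) - tent L n)"]
        summand[of "n + 1" n n "n + 1"] summand[of "n - 1" n "n - 1" "n - 1"]
      by simp
    then show ?thesis
      using power_mono[OF _ abs_ge_zero, of _ _ 2] by fastforce
  qed
  have "sqnorm (jacobi a b ?w) = (\<Sum>n=-(int L+1)..int L+1. (jacobi a b ?w n)\<^sup>2)"
    by (rule sqnorm_supported[OF supported_in_jacobi[OF supported_in_mult_tent[OF L]]])
  also have "\<dots> \<le> (\<Sum>n=-(int L+1)..int L+1. (M / L + M / L)\<^sup>2)"
    by (rule sum_mono) (rule pointwise)
  also have "\<dots> = (2 * L + 3) * (M / L + M / L)\<^sup>2"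
    by (simp add: nat_add_distrib)
  also have "\<dots> \<le> 5 * L * (M / L + M / L)\<^sup>2"
    using L by (intro mult_right_mono) simp_all
  also have "\<dots> = 20 * M\<^sup>2 / L"
    using L by (simp add: power2_eq_square field_simps)
  finally show ?thesis .
qed

lemma approx_eigenvalue_of_bounded_solution:
  fixes a b \<phi> :: "int \<Rightarrow> real"
  assumes a: "\<And>n. \<bar>a n\<bar> \<le> M" and sol: "\<And>n. jacobi a (\<lambda>n. b n - E) \<phi> n = 0"
    and \<phi>: "\<And>n. \<bar>\<phi> n\<bar> \<le> 1" and \<phi>0: "\<bar>\<phi> 0\<bar> = 1"
  shows "approx_eigenvalue a b E"
proof (rule approx_eigenvalueI)
  fix \<epsilon> :: real
  assume \<epsilon>: "0 < \<epsilon>"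
  obtain L :: nat where L: "20 * M\<^sup>2 / \<epsilon> < L" "1 \<le> L"
    using reals_Archimedean2[of "max 1 (20 * M\<^sup>2 / \<epsilon>)"] by (auto simp: of_nat_less_iff)
  let ?w = "\<lambda>n. \<phi> n * tent L n"
  have "(\<phi> 0)\<^sup>2 = 1"
    using power2_abs[of "\<phi> 0"] \<phi>0 by simp
  then have "1 \<le> sqnorm ?w"
    using sum_sq_le_sqnorm[OF _ supported_in_mult_tent[OF L(2)], of "{0}" \<phi>] by (simp add: tent_def)
  have "sqnorm (jacobi a (\<lambda>n. b n - E) ?w) \<le> 20 * M\<^sup>2 / L"
    by (rule sqnorm_jacobi_mult_tent_le[OF a sol \<phi> L(2)])
  also have "\<dots> \<le> \<epsilon>"
    using L \<epsilon> by (simp add: field_simps)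
  also have "\<dots> \<le> \<epsilon> * sqnorm ?w"
    using \<open>1 \<le> sqnorm ?w\<close> \<epsilon> by simp
  finally show "\<exists>x R. supported_in R x \<and> 0 < sqnorm x \<and> sqnorm (jacobi a (\<lambda>n. b n - E) x) \<le> \<epsilon> * sqnorm x"
    using supported_in_mult_tent[OF L(2), of \<phi>] \<open>1 \<le> sqnorm ?w\<close> by auto
qed

text \<open>Compare \<open>\<psi>\<close> with \<open>\<psi> - t (J\<^sup>2 - \<sigma>) \<psi>\<close>, \<open>t = 1/K\<close>, in the inequality \<open>\<sigma> \<parallel>z\<parallel>\<^sup>2 \<le> \<parallel>J z\<parallel>\<^sup>2\<close>.\<close>
lemma sqnorm_jacobi_square_minus_le:
  fixes a b \<psi> :: "int \<Rightarrow> real"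
  defines "J \<equiv> jacobi a b"
  assumes K: "0 < K" "\<And>y R. supported_in R y \<Longrightarrow> sqnorm (J y) \<le> K * sqnorm y"
    and lower: "\<And>y R. supported_in R y \<Longrightarrow> \<sigma> * sqnorm y \<le> sqnorm (J y)" and \<sigma>: "0 \<le> \<sigma>"
    and \<psi>: "supported_in R \<psi>" "sqnorm \<psi> = 1" "sqnorm (J \<psi>) \<le> \<sigma> + \<eta>"
  shows "sqnorm (\<lambda>n. J (J \<psi>) n - \<sigma> * \<psi> n) \<le> K * \<eta>"
proof -
  define y where "y = (\<lambda>n. J (J \<psi>) n - \<sigma> * \<psi> n)"
  define t where "t = 1 / K"
  define Q where "Q = R + 3"
  have \<psi>2: "supported_in (R + 2) \<psi>" and J\<psi>2: "supported_in (R + 2) (J \<psi>)"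
    using supported_in_mono[OF \<psi>(1)] supported_in_mono[OF supported_in_jacobi[OF \<psi>(1)]]
    by (simp_all add: J_def)
  have y: "supported_in (R + 2) y"
    using supported_in_jacobi[OF supported_in_jacobi[OF \<psi>(1)]] \<psi>2
    by (auto simp: supported_in_def y_def J_def add.assoc)
  have J\<psi>Q: "supported_in Q (J \<psi>)" and JyQ: "supported_in Q (J y)"
    and \<psi>Q: "supported_in Q \<psi>" and yQ: "supported_in Q y"
    using supported_in_mono[OF J\<psi>2] supported_in_jacobi[OF y] supported_in_mono[OF \<psi>2]
      supported_in_mono[OF y]
    by (simp_all add: Q_def J_def add.assoc)
  define A where "A = (\<Sum>n=-Q..Q. \<psi> n * y n)"
  define B where "B = (\<Sum>n=-Q..Q. J \<psi> n * J y n)"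
  define Y where "Y = sqnorm y"
  have "B = (\<Sum>n=-Q..Q. J (J \<psi>) n * y n)"
    using sum_jacobi_symmetric[OF J\<psi>2, of a b y] by (simp add: B_def Q_def J_def add.assoc)
  also have "\<dots> = (\<Sum>n=-Q..Q. (y n + \<sigma> * \<psi> n) * y n)"
    by (simp add: y_def)
  also have "\<dots> = Y + \<sigma> * A"
    by (simp add: A_def Y_def sqnorm_supported[OF yQ] power2_eq_square distrib_right
        sum.distrib sum_distrib_left mult.assoc)
  finally have BA: "B = Y + \<sigma> * A" .
  have z: "supported_in Q (\<lambda>n. \<psi> n + (- t) * y n)"
    by (rule supported_in_add_scale[OF \<psi>Q yQ])
  have "J (\<lambda>n. \<psi> n + (- t) * y n) = (\<lambda>n. J \<psi> n + (- t) * J y n)"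
    unfolding J_def by (rule jacobi_add_scale)
  then have "\<sigma> * (1 + 2 * (- t) * A + t\<^sup>2 * Y) \<le> sqnorm (J \<psi>) + 2 * (- t) * B + t\<^sup>2 * sqnorm (J y)"
    using lower[OF z] sqnorm_add_scale[OF \<psi>Q yQ, of "- t"] sqnorm_add_scale[OF J\<psi>Q JyQ, of "- t"] \<psi>(2)
    by (simp add: A_def B_def Y_def)
  moreover have "t\<^sup>2 * sqnorm (J y) \<le> t * Y"
    using mult_left_mono[OF K(2)[OF y], of "t\<^sup>2"] K(1) by (simp add: Y_def t_def power2_eq_square)
  moreover have "0 \<le> \<sigma> * t\<^sup>2 * Y"
    using \<sigma> by (simp add: Y_def sqnorm_nonneg)
  ultimately have "t * Y \<le> \<eta>"
    using \<psi>(3) BA by (simp add: algebra_simps)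
  then show ?thesis
    using K(1) by (simp add: Y_def y_def t_def field_simps)
qed

lemma approx_eigenvalue_of_square:
  fixes a b :: "int \<Rightarrow> real"
  assumes sq: "\<And>\<eta>. 0 < \<eta> \<Longrightarrow> \<exists>\<psi> R. supported_in R \<psi> \<and> sqnorm \<psi> = 1
                 \<and> sqnorm (\<lambda>n. jacobi a b (jacobi a b \<psi>) n - s\<^sup>2 * \<psi> n) \<le> \<eta>"
  shows "approx_eigenvalue a b s \<or> approx_eigenvalue a b (- s)"
proof (rule ccontr)
  let ?J = "\<lambda>E. jacobi a (\<lambda>n. b n - E)"
  have not_approx: "\<exists>e>0. \<forall>\<psi> R. supported_in R \<psi> \<longrightarrow> sqnorm \<psi> = 1 \<longrightarrow> e < sqnorm (?J E \<psi>)"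
    if "\<not> approx_eigenvalue a b E" for E
    using that unfolding approx_eigenvalue_def by (auto simp: not_le)
  assume "\<not> (approx_eigenvalue a b s \<or> approx_eigenvalue a b (- s))"
  then obtain e1 e2 where e: "0 < e1" "0 < e2"
    and not_s: "\<And>\<psi> R. supported_in R \<psi> \<Longrightarrow> sqnorm \<psi> = 1 \<Longrightarrow> e1 < sqnorm (?J s \<psi>)"
    and not_neg_s: "\<And>\<psi> R. supported_in R \<psi> \<Longrightarrow> sqnorm \<psi> = 1 \<Longrightarrow> e2 < sqnorm (?J (- s) \<psi>)"
    using not_approx[of s] not_approx[of "- s"] by blast
  obtain \<psi> R where \<psi>: "supported_in R \<psi>" "sqnorm \<psi> = 1"
    and y: "sqnorm (\<lambda>n. jacobi a b (jacobi a b \<psi>) n - s\<^sup>2 * \<psi> n) \<le> e1 * e2"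
    using sq[of "e1 * e2"] e by auto
  define \<phi> where "\<phi> = ?J (- s) \<psi>"
  have \<phi>: "supported_in (R + 1) \<phi>" "e2 < sqnorm \<phi>"
    using supported_in_jacobi[OF \<psi>(1)] not_neg_s[OF \<psi>] by (simp_all add: \<phi>_def)
  have "?J s \<phi> = (\<lambda>n. jacobi a b (jacobi a b \<psi>) n - s\<^sup>2 * \<psi> n)"
    by (simp add: fun_eq_iff \<phi>_def jacobi_def power2_eq_square algebra_simps)
  then have J\<phi>: "sqnorm (?J s \<phi>) \<le> e1 * sqnorm \<phi>"
    using y mult_strict_left_mono[OF \<phi>(2) e(1)] by simp
  have "0 < sqnorm \<phi>"
    using \<phi>(2) e(2) by linarith
  then obtain \<omega> where \<omega>: "supported_in (R + 1) \<omega>" "sqnorm \<omega> = 1"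
    "sqnorm (?J s \<omega>) * sqnorm \<phi> = sqnorm (?J s \<phi>)"
    using normalize_supported[OF \<phi>(1)] by blast
  then have "sqnorm (?J s \<omega>) \<le> e1"
    using J\<phi> \<open>0 < sqnorm \<phi>\<close> by (simp add: mult_le_cancel_right_pos flip: \<omega>(3))
  then show False
    using not_s[OF \<omega>(1,2)] by linarith
qed

definition inf_sqnorm_jacobi :: "(int \<Rightarrow> real) \<Rightarrow> (int \<Rightarrow> real) \<Rightarrow> real" where
  "inf_sqnorm_jacobi a b = Inf {sqnorm (jacobi a b \<psi>) | \<psi> R. supported_in R \<psi> \<and> sqnorm \<psi> = 1}"

lemma inf_sqnorm_jacobi_le:
  "supported_in R \<psi> \<Longrightarrow> sqnorm \<psi> = 1 \<Longrightarrow> inf_sqnorm_jacobi a b \<le> sqnorm (jacobi a b \<psi>)"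
  unfolding inf_sqnorm_jacobi_def
  by (rule cInf_lower) (auto intro: bdd_belowI[of _ 0] simp: sqnorm_nonneg)

lemma inf_sqnorm_jacobi_nonempty:
  "{sqnorm (jacobi a b \<psi>) | \<psi> R. supported_in R \<psi> \<and> sqnorm \<psi> = 1} \<noteq> {}"
proof -
  have "supported_in 0 (\<lambda>n::int. if n = 0 then 1 else 0 :: real)"
    by (simp add: supported_in_def)
  moreover have "sqnorm (\<lambda>n::int. if n = 0 then 1 else 0 :: real) = 1"
    by (simp add: sqnorm_def)
  ultimately show ?thesis
    by blast
qed

lemma inf_sqnorm_jacobi_nonneg: "0 \<le> inf_sqnorm_jacobi a b"
  unfolding inf_sqnorm_jacobi_def
  by (rule cInf_greatest[OF inf_sqnorm_jacobi_nonempty]) (auto simp: sqnorm_nonneg)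

lemma inf_sqnorm_jacobi_mult_le:
  assumes x: "supported_in R x"
  shows "inf_sqnorm_jacobi a b * sqnorm x \<le> sqnorm (jacobi a b x)"
proof (cases "sqnorm x = 0")
  case False
  then have "0 < sqnorm x"
    using sqnorm_nonneg[of x] by linarith
  then obtain \<psi> where \<psi>: "supported_in R \<psi>" "sqnorm \<psi> = 1"
    "sqnorm (jacobi a b \<psi>) * sqnorm x = sqnorm (jacobi a b x)"
    using normalize_supported[OF x] by blast
  then show ?thesis
    using mult_right_mono[OF inf_sqnorm_jacobi_le[OF \<psi>(1,2), of a b] sqnorm_nonneg[of x]] by simp
qed (simp add: sqnorm_nonneg)

lemma inf_sqnorm_jacobi_approx:
  assumes "0 < \<eta>"
  shows "\<exists>\<psi> R. supported_in R \<psi> \<and> sqnorm \<psi> = 1 \<and> sqnorm (jacobi a b \<psi>) < inf_sqnorm_jacobi a b + \<eta>"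
proof -
  have "Inf {sqnorm (jacobi a b \<psi>) | \<psi> R. supported_in R \<psi> \<and> sqnorm \<psi> = 1} < inf_sqnorm_jacobi a b + \<eta>"
    using assms by (simp add: inf_sqnorm_jacobi_def)
  from cInf_lessD[OF inf_sqnorm_jacobi_nonempty this] show ?thesis
    by blast
qed

lemma approx_eigenvalue_below_test_vector:
  fixes a b x :: "int \<Rightarrow> real"
  assumes a: "\<And>n. \<bar>a n\<bar> \<le> M" and b: "\<And>n. \<bar>b n\<bar> \<le> M"
    and x: "supported_in R x" "sqnorm (jacobi a b x) < c * sqnorm x"
  shows "\<exists>E. E\<^sup>2 < c \<and> approx_eigenvalue a b E"
proof -
  define \<sigma> where "\<sigma> = inf_sqnorm_jacobi a b"
  define K where "K = 9 * M\<^sup>2 + 1"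
  have K: "0 < K" "\<And>y R. supported_in R y \<Longrightarrow> sqnorm (jacobi a b y) \<le> K * sqnorm y"
    using order_trans[OF sqnorm_jacobi_le[where a = a and b = b, OF a b]
        mult_right_mono[OF _ sqnorm_nonneg, of "9 * M\<^sup>2" K]]
    by (simp_all add: K_def add_nonneg_pos)
  have "\<sigma> * sqnorm x < c * sqnorm x"
    using inf_sqnorm_jacobi_mult_le[OF x(1), of a b] x(2) by (simp add: \<sigma>_def)
  then have "\<sigma> < c"
    using sqnorm_nonneg[of x] by (meson mult_less_cancel_right)
  have "\<exists>\<psi> R. supported_in R \<psi> \<and> sqnorm \<psi> = 1
          \<and> sqnorm (\<lambda>n. jacobi a b (jacobi a b \<psi>) n - (sqrt \<sigma>)\<^sup>2 * \<psi> n) \<le> \<eta>" if "0 < \<eta>" for \<eta>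
  proof -
    have "0 < \<eta> / K"
      using that K(1) by simp
    then obtain \<psi> R where \<psi>: "supported_in R \<psi>" "sqnorm \<psi> = 1" "sqnorm (jacobi a b \<psi>) < \<sigma> + \<eta> / K"
      unfolding \<sigma>_def using inf_sqnorm_jacobi_approx by blast
    have "sqnorm (\<lambda>n. jacobi a b (jacobi a b \<psi>) n - \<sigma> * \<psi> n) \<le> K * (\<eta> / K)"
      unfolding \<sigma>_def
      by (rule sqnorm_jacobi_square_minus_le[OF K inf_sqnorm_jacobi_mult_le inf_sqnorm_jacobi_nonneg
            \<psi>(1,2) less_imp_le[OF \<psi>(3), unfolded \<sigma>_def]])
    then show ?thesis
      using \<psi> K(1) inf_sqnorm_jacobi_nonneg[of a b] by (auto simp: \<sigma>_def)
  qed
  then have "approx_eigenvalue a b (sqrt \<sigma>) \<or> approx_eigenvalue a b (- sqrt \<sigma>)"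
    by (rule approx_eigenvalue_of_square)
  moreover have "(sqrt \<sigma>)\<^sup>2 < c" "(- sqrt \<sigma>)\<^sup>2 < c"
    using inf_sqnorm_jacobi_nonneg[of a b] \<open>\<sigma> < c\<close> by (simp_all add: \<sigma>_def)
  ultimately show ?thesis
    by blast
qed

lemma Hop_eq_jacobi: "Hop lam \<alpha> \<theta> = jacobi (complexify (chop lam \<alpha> \<theta>)) (complexify (vpot \<alpha> \<theta>))"
  by (simp add: fun_eq_iff Hop_def jacobi_def)

lemma abs_chop_le: "0 \<le> lam \<Longrightarrow> \<bar>chop lam \<alpha> \<theta> n\<bar> \<le> lam + 1"
  by (auto simp: chop_def intro: order_trans[OF abs_cos_le_one])

lemma abs_vpot_le: "\<bar>vpot \<alpha> \<theta> n\<bar> \<le> 1"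
  by (simp add: vpot_def abs_cos_le_one)

lemma int_even_odd_cases:
  fixes n :: int
  obtains k where "n = 2 * k" | k where "n = 2 * k + 1"
  by (metis odd_two_times_div_two_succ even_two_times_div_two)

text \<open>On each dimer \<open>{2k, 2k+1}\<close> the operator acts by \<open>cos 2\<pi>(2k\<alpha> + \<theta>)\<close> times the all-ones
  \<open>2\<times>2\<close> block, and consecutive dimers are coupled by \<open>\<lambda>\<close>. Sequences that are antisymmetric on every
  dimer are annihilated by the blocks, which leaves a hopping of strength \<open>\<lambda>\<close>.\<close>

lemma chop_vpot_solution_lam:
  "jacobi (chop lam \<alpha> \<theta>) (\<lambda>n. vpot \<alpha> \<theta> n - lam) (\<lambda>n. if even ((n + 1) div 2) then 1 else -1) n = 0"
proof (cases n rule: int_even_odd_cases)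
  case (1 k)
  have "(2 * k + 1) div 2 = k" "(2 * k - 1 + 1) div 2 = k" "(2 * k + 1 + 1) div 2 = k + 1"
    "odd (2 * k - 1)" "even (k + 1) \<longleftrightarrow> odd k"
    by presburger+
  then show ?thesis
    by (simp add: 1 jacobi_def chop_def vpot_def del: odd_add even_add) (auto simp: algebra_simps)
next
  case (2 k)
  have "(2 * k + 1 + 1) div 2 = k + 1" "(2 * k + 1 + 1 + 1) div 2 = k + 1" "(2 * k + 1 - 1 + 1) div 2 = k"
    "odd (2 * k + 1)" "even (2 * k + 1 + 1)" "even (k + 1) \<longleftrightarrow> odd k"
    by presburger+
  then show ?thesis
    by (simp add: 2 jacobi_def chop_def vpot_def del: odd_add even_add) (auto simp: algebra_simps)
qed

lemma chop_vpot_solution_minus_lam: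
  "jacobi (chop lam \<alpha> \<theta>) (\<lambda>n. vpot \<alpha> \<theta> n + lam) (\<lambda>n. if odd n then 1 else -1) n = 0"
proof (cases n rule: int_even_odd_cases)
  case (1 k)
  have "odd (2 * k + 1)" "odd (2 * k - 1)"
    by presburger+
  then show ?thesis
    by (simp add: 1 jacobi_def chop_def vpot_def del: odd_add even_add)
next
  case (2 k)
  have "odd (2 * k + 1)" "even (2 * k + 1 + 1)"
    by presburger+
  then show ?thesis
    by (simp add: 2 jacobi_def chop_def vpot_def del: odd_add even_add)
qed

lemma chop_vpot_test_vector:
  assumes lam: "0 < lam" and nonzero: "cos (2 * pi * \<theta>) \<noteq> 0"
  defines "c \<equiv> cos (2 * pi * \<theta>)"
  defines "x \<equiv> \<lambda>n::int. if n = -2 \<or> n = 3 then c / lam else if n = -1 \<or> n = 2 then - (c / lam)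
                     else if n = 0 then 1 else 0"
  shows "supported_in 3 x" "sqnorm (jacobi (chop lam \<alpha> \<theta>) (vpot \<alpha> \<theta>) x) < lam\<^sup>2 * sqnorm x"
proof -
  have I3: "{-3..3} = {-3, -2, -1, 0, 1, 2, 3::int}" and I4: "{-4..4} = {-4, -3, -2, -1, 0, 1, 2, 3, 4::int}"
    by auto
  show x: "supported_in 3 x"
    by (simp add: supported_in_def x_def)
  have "sqnorm x = 1 + 4 * (c / lam)\<^sup>2"
    unfolding sqnorm_supported[OF x] by (simp add: I3 x_def)
  then have "lam\<^sup>2 * sqnorm x = lam\<^sup>2 + 4 * c\<^sup>2"
    using lam by (simp add: power_divide field_simps)
  moreover have "sqnorm (jacobi (chop lam \<alpha> \<theta>) (vpot \<alpha> \<theta>) x) = lam\<^sup>2 + 2 * c\<^sup>2"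
    unfolding sqnorm_supported[OF supported_in_jacobi[OF x]]
    using lam by (simp add: I4 jacobi_def chop_def vpot_def x_def c_def)
  ultimately show "sqnorm (jacobi (chop lam \<alpha> \<theta>) (vpot \<alpha> \<theta>) x) < lam\<^sup>2 * sqnorm x"
    using nonzero by (simp add: c_def)
qed

theorem corollary3p5:
  fixes lam \<alpha> \<theta> :: real
  assumes "lam > 0" and "\<alpha> \<notin> \<rat>" and "\<theta> \<in> T0 \<alpha>"
  shows "complex_of_real lam \<in> spec_l2Z (Hop lam \<alpha> \<theta>)
       \<and> complex_of_real (- lam) \<in> spec_l2Z (Hop lam \<alpha> \<theta>)
       \<and> (\<exists>E::real. - lam < E \<and> E < lam \<and> complex_of_real E \<in> spec_l2Z (Hop lam \<alpha> \<theta>))"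
proof -
  let ?a = "chop lam \<alpha> \<theta>" and ?b = "vpot \<alpha> \<theta>"
  have a: "\<bar>?a n\<bar> \<le> lam + 1" and b: "\<bar>?b n\<bar> \<le> lam + 1" for n
    using abs_chop_le[of lam] abs_vpot_le[of \<alpha> \<theta> n] assms(1) by simp_all
  have in_spec: "complex_of_real E \<in> spec_l2Z (Hop lam \<alpha> \<theta>)" if "approx_eigenvalue ?a ?b E" for E
    unfolding Hop_eq_jacobi using a b that by (rule approx_eigenvalue_in_spec_l2Z)
  have "approx_eigenvalue ?a ?b lam"
    by (rule approx_eigenvalue_of_bounded_solution[OF a chop_vpot_solution_lam]) simp_all
  moreover have "approx_eigenvalue ?a ?b (- lam)"
    by (rule approx_eigenvalue_of_bounded_solution[OF a, where \<phi> = "\<lambda>n. if odd n then 1 else -1"])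
      (simp_all add: chop_vpot_solution_minus_lam)
  moreover have "cos (2 * pi * (of_int 0 * \<alpha> + \<theta>)) \<noteq> 0"
    using assms(3) unfolding T0_def by blast
  then obtain E where "E\<^sup>2 < lam\<^sup>2" "approx_eigenvalue ?a ?b E"
    using approx_eigenvalue_below_test_vector[OF a b chop_vpot_test_vector[OF assms(1)]] by auto
  moreover have "\<bar>E\<bar> < lam"
    using power_less_imp_less_base[of "\<bar>E\<bar>" 2 lam] \<open>E\<^sup>2 < lam\<^sup>2\<close> assms(1) by simp
  ultimately show ?thesis
    using in_spec[of lam] in_spec[of "- lam"] in_spec[of E] by (auto simp: abs_less_iff intro!: exI[of _ E])
qed

end
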